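(* Let $P$ be a probability measure on $(\Omega,\mathcal A)$ and $\delta\in(\tfrac12,1)$. Then the C-measure generated by the C-class $\bar T(P,\delta)=\{A\in\bar{\mathcal A}:\bar P(A)\ge\delta\}$ equals $\bar P$, i.e. $\bar M_{\bar T(P,\delta)}(A)=\bar P(A)$ for all $A\in\bar{\mathcal A}$.
   Context: Let $(\Omega,\mathcal A)$ be a measurable space. For $n\ge1$, $\mathcal A^n$ is the product $\sigma$-algebra on $\Omega^n$; the extended event space is $\bar{\mathcal A}=\bigcup_{n\ge1}\mathcal A^n$, events tagged by their level $n$ (written $A^{(n)}$). For $k\ge1$, $(\Omega^n)^k$ is identified with $\Omega^{nk}$ and $(\mathcal A^n)^k$ with $\mathcal A^{nk}$. For a probability measure $P$ on $\mathcal A$, $P^n$ is its $n$-fold product, and $\bar P(A^{(n)})=P^n(A^{(n)})$. For $A^{(n)}\in\mathcal A^n$, an interval $I\subseteq[0,1]$ and $k\in\mathbb N^+$, $S(A^{(n)},I,k)=\{(\omega_1,\dots,\omega_k)\in(\Omega^n)^k:\frac1k\sum_{i=1}^k\chi_{A^{(n)}}(\omega_i)\in I\}$. A class $\bar{\mathbf C}\subseteq\bar{\mathcal A}$ is a C-class if each component $\mathcal C^{(n)}=\bar{\mathbf C}\cap\mathcal A^n$ contains $\Omega^n$, is closed under supersets within $\mathcal A^n$, and contains no two disjoint events. "$S(A,I,k)\in\bar{\mathbf C}$ definitively" means there is $k_0$ with $S(A,I,k)\in\bar{\mathbf C}$ for all $k>k_0$. The C-measure of a C-class is $\bar M_{\bar{\mathbf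 C}}(A)=\sup\{\sigma\in[0,1]: S(A,[\sigma,1],k)\in\bar{\mathbf C}\text{ definitively}\}$. *)

theory Defs
  imports "HOL-Probability.Probability"
begin

text \<open>Level-n product space: \<Omega>^n is modelled as PiM {..<n} (\<lambda>_. M)
  (extensional functions on {..<n}).  An event of the extended event space
  tagged with its level n is a pair (n, A) with n \<ge> 1 and A a measurable
  set of the level-n product.\<close>

definition prodM :: "'a measure \<Rightarrow> nat \<Rightarrow> (nat \<Rightarrow> 'a) measure" where
  "prodM M n = PiM {..<n} (\<lambda>_. M)"

definition ext_events :: "'a measure \<Rightarrow> (nat \<times> (nat \<Rightarrow> 'a) set) set" where
  "ext_events M = {(n, A). n \<ge> 1 \<and> A \<in> sets (prodM M n)}"

text \<open>Identification of (\<Omega>^n)^k with \<Omega>^(nk): the i-th block (i < k) of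
  \<omega> \<in> \<Omega>^(nk) is the element of \<Omega>^n given by j \<mapsto> \<omega> (i*n + j).\<close>

definition block :: "nat \<Rightarrow> nat \<Rightarrow> (nat \<Rightarrow> 'a) \<Rightarrow> (nat \<Rightarrow> 'a)" where
  "block n i \<omega> = restrict (\<lambda>j. \<omega> (i * n + j)) {..<n}"

definition S_set :: "'a measure \<Rightarrow> nat \<Rightarrow> (nat \<Rightarrow> 'a) set \<Rightarrow> real set \<Rightarrow> nat
    \<Rightarrow> (nat \<Rightarrow> 'a) set" where
  "S_set M n A I k = {\<omega> \<in> space (prodM M (n * k)).
      real (card {i. i < k \<and> block n i \<omega> \<in> A}) / real k \<in> I}"

definition C_class :: "'a measure \<Rightarrow> (nat \<times> (nat \<Rightarrow> 'a) set) set \<Rightarrow> bool" where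
  "C_class M C \<longleftrightarrow> C \<subseteq> ext_events M \<and>
     (\<forall>n\<ge>1. (n, space (prodM M n)) \<in> C) \<and>
     (\<forall>n A B. (n, A) \<in> C \<longrightarrow> A \<subseteq> B \<longrightarrow> B \<in> sets (prodM M n) \<longrightarrow> (n, B) \<in> C) \<and>
     (\<forall>n A B. (n, A) \<in> C \<longrightarrow> (n, B) \<in> C \<longrightarrow> A \<inter> B \<noteq> {})"

definition C_measure :: "'a measure \<Rightarrow> (nat \<times> (nat \<Rightarrow> 'a) set) set \<Rightarrow> nat
    \<Rightarrow> (nat \<Rightarrow> 'a) set \<Rightarrow> real" where
  "C_measure M C n A = Sup {\<sigma> \<in> {0..1}.
      \<exists>k0. \<forall>k>k0. (n * k, S_set M n A {\<sigma>..1} k) \<in> C}"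

definition T_class :: "'a measure \<Rightarrow> real \<Rightarrow> (nat \<times> (nat \<Rightarrow> 'a) set) set" where
  "T_class M \<delta> = {(n, A) \<in> ext_events M. measure (prodM M n) A \<ge> \<delta>}"

end

theory Submission imports Defs begin

text \<open>Read a level-\<open>nk\<close> sample as \<open>k\<close> independent blocks of length \<open>n\<close>, each distributed
  like \<open>P\<^sup>n\<close>. The number of blocks lying in \<open>A\<close> is then a sum of \<open>k\<close> independent indicators
  with mean \<open>p = P\<^sup>n(A)\<close>, and Hoeffding's inequality shows that the probability of a
  frequency \<open>\<ge> \<sigma>\<close> tends to 1 for \<open>\<sigma> < p\<close> and to 0 for \<open>\<sigma> > p\<close>. As \<open>0 < \<delta> < 1\<close>, the event
  \<open>S(A, [\<sigma>,1], k)\<close> is therefore eventually in \<open>T(P,\<delta>)\<close> for \<open>\<sigma> < p\<close> and eventually not for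
  \<open>\<sigma> > p\<close>, so the supremum defining the C-measure is \<open>p\<close>.\<close>

lemma prob_space_prodM: "prob_space M \<Longrightarrow> prob_space (prodM M n)"
  unfolding prodM_def by (rule prob_space_PiM)

lemma indep_vars_PiM_components:
  assumes M: "\<And>i. prob_space (M i)" and I: "I \<noteq> {}"
  shows "prob_space.indep_vars (PiM I M) M (\<lambda>i \<omega>. \<omega> i) I"
proof -
  interpret P: prob_space "PiM I M" by (rule prob_space_PiM) (use M in auto)
  have "distr (PiM I M) (PiM I M) (\<lambda>x. \<lambda>i\<in>I. x i) = distr (PiM I M) (PiM I M) (\<lambda>x. x)"
    by (rule distr_cong) (auto simp: space_PiM PiE_def extensional_restrict)
  also have "\<dots> = PiM I (\<lambda>i. distr (PiM I M) (M i) (\<lambda>x. x i))"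
    unfolding distr_id by (rule PiM_cong[OF refl], subst distr_PiM_component) (use M in auto)
  finally show ?thesis
    by (subst P.indep_vars_iff_distr_eq_PiM'[OF I]) auto
qed

lemma block_index_less:
  fixes i j k n :: nat
  assumes "i < k" "j < n"
  shows "i * n + j < n * k"
proof -
  have "Suc i * n \<le> k * n" using assms(1) by (intro mult_le_mono1) simp
  then show ?thesis using assms(2) by (simp add: mult.commute)
qed

lemma measurable_block:
  assumes "i < k"
  shows "block n i \<in> measurable (prodM M (n * k)) (prodM M n)"
  unfolding block_def prodM_def using block_index_less[OF assms]
  by (intro measurable_restrict) (auto intro!: measurable_component_singleton)

lemma distr_block:
  assumes "prob_space M" and "i < k"
  shows "distr (prodM M (n * k)) (prodM M n) (block n i) = prodM M n"
  unfolding block_def prodM_def using block_index_less[OF assms(2)]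
  by (subst distr_PiM_reindex) (auto simp: assms(1) inj_on_def)

lemma expectation_indicator_block:
  assumes M: "prob_space M" and A: "A \<in> sets (prodM M n)" and "i < k"
  shows "(\<integral>\<omega>. indicator A (block n i \<omega>) \<partial>prodM M (n * k)) = measure (prodM M n) A"
proof -
  interpret Q: prob_space "prodM M n" by (rule prob_space_prodM[OF M])
  have "(\<integral>\<omega>. indicator A (block n i \<omega>) \<partial>prodM M (n * k))
      = (\<integral>x. (indicator A x :: real) \<partial>distr (prodM M (n * k)) (prodM M n) (block n i))"
    by (rule integral_distr[symmetric]) (use A measurable_block[OF \<open>i < k\<close>] in auto)
  then show ?thesis
    unfolding distr_block[OF M \<open>i < k\<close>] using A by (simp add: Q.emeasure_eq_measure)
qed

text \<open>The blocks read disjoint sets of coordinates \<open>{i n..<i n + n}\<close> of a product measure.\<close>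

lemma indep_vars_block:
  assumes M: "prob_space M" and n: "n \<ge> 1" and k: "k \<ge> 1"
  shows "prob_space.indep_vars (prodM M (n * k)) (\<lambda>_. prodM M n) (block n) {..<k}"
proof -
  interpret P: prob_space "prodM M (n * k)" by (rule prob_space_prodM[OF M])
  define K where "K i = {i * n..<i * n + n}" for i
  have K_sub: "K i \<subseteq> {..<n * k}" if "i \<in> {..<k}" for i
  proof -
    have "Suc i * n \<le> k * n" using that by (intro mult_le_mono1) simp
    then show ?thesis by (auto simp: K_def mult.commute)
  qed
  have K_disj: "disjoint_family_on K {..<k}"
    unfolding disjoint_family_on_def
  proof (intro ballI impI)
    fix i j assume "i \<in> {..<k}" "j \<in> {..<k}" "i \<noteq> j"
    then consider "Suc i * n \<le> j * n" | "Suc j * n \<le> i * n"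
      by (metis Suc_leI linorder_neqE_nat mult_le_mono1)
    then show "K i \<inter> K j = {}" by cases (auto simp: K_def)
  qed
  have "P.indep_vars (\<lambda>_. M) (\<lambda>j \<omega>. \<omega> j) {..<n * k}"
    using indep_vars_PiM_components[of "\<lambda>_. M" "{..<n * k}"] M n k
    by (simp add: prodM_def lessThan_empty_iff)
  then have "P.indep_vars (\<lambda>i. PiM (K i) (\<lambda>_. M)) (\<lambda>i \<omega>. restrict (\<lambda>j. \<omega> j) (K i)) {..<k}"
    using K_sub K_disj by (rule P.indep_vars_restrict)
  moreover define shift where "shift i f = (\<lambda>j\<in>{..<n}. f (i * n + j))" for i and f :: "nat \<Rightarrow> 'a"
  have "shift i \<in> measurable (PiM (K i) (\<lambda>_. M)) (prodM M n)" for i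
    unfolding shift_def prodM_def
    by (rule measurable_restrict) (auto simp: K_def intro!: measurable_component_singleton)
  ultimately have "P.indep_vars (\<lambda>_. prodM M n) (\<lambda>i \<omega>. shift i (restrict (\<lambda>j. \<omega> j) (K i))) {..<k}"
    by (rule P.indep_vars_compose2)
  moreover have "(\<lambda>i \<omega>. shift i (restrict (\<lambda>j. \<omega> j) (K i))) = block n"
    by (intro ext) (auto simp: shift_def block_def K_def)
  ultimately show ?thesis by (simp only:)
qed

definition block_count :: "nat \<Rightarrow> (nat \<Rightarrow> 'a) set \<Rightarrow> nat \<Rightarrow> (nat \<Rightarrow> 'a) \<Rightarrow> real" where
  "block_count n A k \<omega> = (\<Sum>i<k. indicator A (block n i \<omega>))"

lemma block_count_eq_card: "block_count n A k \<omega> = real (card {i. i < k \<and> block n i \<omega> \<in> A})"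
proof -
  have "block_count n A k \<omega> = (\<Sum>i\<in>{i. i < k \<and> block n i \<omega> \<in> A}. 1)"
    unfolding block_count_def by (rule sum.mono_neutral_cong_right) (auto simp: indicator_def)
  then show ?thesis by simp
qed

lemma block_count_le: "block_count n A k \<omega> \<le> real k"
  using card_mono[of "{..<k}" "{i. i < k \<and> block n i \<omega> \<in> A}"] by (auto simp: block_count_eq_card)

lemma borel_measurable_block_count:
  assumes "A \<in> sets (prodM M n)"
  shows "block_count n A k \<in> borel_measurable (prodM M (n * k))"
  unfolding block_count_def using measurable_block assms by measurable

lemma S_set_atLeast_eq:
  assumes "k \<ge> 1"
  shows "S_set M n A {\<sigma>..1} k = {\<omega> \<in> space (prodM M (n * k)). real k * \<sigma> \<le> block_count n A k \<omega>}"
  using assms block_count_le[of n A k]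
  by (auto simp: S_set_def block_count_eq_card[symmetric] field_simps)

lemma block_count_Hoeffding:
  assumes M: "prob_space M" and A: "A \<in> sets (prodM M n)" and n: "n \<ge> 1" and k: "k \<ge> 1"
    and "\<epsilon> \<ge> 0"
  defines "p \<equiv> measure (prodM M n) A"
  shows "measure (prodM M (n * k)) {\<omega> \<in> space (prodM M (n * k)).
           real k * (p + \<epsilon>) \<le> block_count n A k \<omega>} \<le> exp (-2 * real k * \<epsilon>\<^sup>2)"
    and "measure (prodM M (n * k)) {\<omega> \<in> space (prodM M (n * k)).
           block_count n A k \<omega> \<le> real k * (p - \<epsilon>)} \<le> exp (-2 * real k * \<epsilon>\<^sup>2)"
proof -
  interpret P: prob_space "prodM M (n * k)" by (rule prob_space_prodM[OF M])
  have indep: "P.indep_vars (\<lambda>_. borel) (\<lambda>i \<omega>. indicator A (block n i \<omega>) :: real) {..<k}"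
    by (rule P.indep_vars_compose2[OF indep_vars_block[OF M n k], where Y="\<lambda>_. indicator A"])
      (use A in simp)
  interpret H: Hoeffding_ineq "prodM M (n * k)" "{..<k}"
    "\<lambda>i \<omega>. indicator A (block n i \<omega>)" "\<lambda>_. 0" "\<lambda>_. 1" "real k * p"
  proof unfold_locales
    show "AE \<omega> in prodM M (n * k). indicator A (block n i \<omega>) \<in> {0..1::real}" for i
      by (auto simp: indicator_def)
    show "real k * p \<equiv> \<Sum>i\<in>{..<k}. P.expectation (\<lambda>\<omega>. indicator A (block n i \<omega>))"
      by (simp add: expectation_indicator_block[OF M A] p_def)
  qed (use indep in auto)
  have "exp (-2 * (real k * \<epsilon>)\<^sup>2 / (\<Sum>i<k. (1 - 0)\<^sup>2)) = exp (-2 * real k * \<epsilon>\<^sup>2)"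
    using k by (simp add: power2_eq_square)
  then show "P.prob {\<omega> \<in> space (prodM M (n * k)). real k * (p + \<epsilon>) \<le> block_count n A k \<omega>}
      \<le> exp (-2 * real k * \<epsilon>\<^sup>2)"
    and "P.prob {\<omega> \<in> space (prodM M (n * k)). block_count n A k \<omega> \<le> real k * (p - \<epsilon>)}
      \<le> exp (-2 * real k * \<epsilon>\<^sup>2)"
    using H.Hoeffding_ineq_ge[of "real k * \<epsilon>"] H.Hoeffding_ineq_le[of "real k * \<epsilon>"] k \<open>\<epsilon> \<ge> 0\<close>
    by (simp_all add: block_count_def distrib_left right_diff_distrib)
qed

lemma exp_neg_linear_LIMSEQ_0:
  fixes c :: real
  assumes "c > 0"
  shows "(\<lambda>k. exp (-2 * real k * c)) \<longlonglongrightarrow> 0"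
proof -
  have "(\<lambda>k. exp (-2 * c) ^ k) \<longlonglongrightarrow> 0"
    by (rule LIMSEQ_power_zero) (use assms in simp)
  then show ?thesis by (simp add: exp_of_nat_mult[symmetric] mult_ac)
qed

lemma prob_block_count_ge_LIMSEQ_1:
  assumes M: "prob_space M" and A: "A \<in> sets (prodM M n)" and n: "n \<ge> 1"
    and \<sigma>: "\<sigma> < measure (prodM M n) A"
  shows "(\<lambda>k. measure (prodM M (n * k))
           {\<omega> \<in> space (prodM M (n * k)). real k * \<sigma> \<le> block_count n A k \<omega>}) \<longlonglongrightarrow> 1"
proof -
  define \<epsilon> where "\<epsilon> = measure (prodM M n) A - \<sigma>"
  have "\<epsilon> > 0" using \<sigma> by (simp add: \<epsilon>_def)
  have lower: "eventually (\<lambda>k. 1 - exp (-2 * real k * \<epsilon>\<^sup>2) \<le> measure (prodM M (n * k))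
      {\<omega> \<in> space (prodM M (n * k)). real k * \<sigma> \<le> block_count n A k \<omega>}) sequentially"
    using eventually_ge_at_top[of 1]
  proof eventually_elim
    case (elim k)
    interpret P: prob_space "prodM M (n * k)" by (rule prob_space_prodM[OF M])
    let ?S = "{\<omega> \<in> space (prodM M (n * k)). real k * \<sigma> \<le> block_count n A k \<omega>}"
    let ?T = "{\<omega> \<in> space (prodM M (n * k)).
      block_count n A k \<omega> \<le> real k * (measure (prodM M n) A - \<epsilon>)}"
    have meas: "?S \<in> P.events" "?T \<in> P.events"
      by (intro borel_measurable_le borel_measurable_const borel_measurable_block_count[OF A])+
    have "1 - P.prob ?S = P.prob (space (prodM M (n * k)) - ?S)"
      using P.prob_compl[OF meas(1)] by simp
    also have "\<dots> \<le> P.prob ?T"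
      using meas by (intro P.finite_measure_mono) (auto simp: \<epsilon>_def)
    also have "\<dots> \<le> exp (-2 * real k * \<epsilon>\<^sup>2)"
      using block_count_Hoeffding(2)[OF M A n elim, of \<epsilon>] \<open>\<epsilon> > 0\<close> by simp
    finally show ?case by simp
  qed
  have upper: "eventually (\<lambda>k. measure (prodM M (n * k))
      {\<omega> \<in> space (prodM M (n * k)). real k * \<sigma> \<le> block_count n A k \<omega>} \<le> 1) sequentially"
    by (simp add: prob_space.prob_le_1[OF prob_space_prodM[OF M]])
  have "(\<lambda>k. 1 - exp (-2 * real k * \<epsilon>\<^sup>2)) \<longlonglongrightarrow> 1 - 0"
    using \<open>\<epsilon> > 0\<close> by (intro tendsto_diff tendsto_const exp_neg_linear_LIMSEQ_0) simp
  from tendsto_sandwich[OF lower upper _ tendsto_const] this show ?thesis by simp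
qed

lemma prob_block_count_ge_LIMSEQ_0:
  assumes M: "prob_space M" and A: "A \<in> sets (prodM M n)" and n: "n \<ge> 1"
    and \<sigma>: "measure (prodM M n) A < \<sigma>"
  shows "(\<lambda>k. measure (prodM M (n * k))
           {\<omega> \<in> space (prodM M (n * k)). real k * \<sigma> \<le> block_count n A k \<omega>}) \<longlonglongrightarrow> 0"
proof -
  define \<epsilon> where "\<epsilon> = \<sigma> - measure (prodM M n) A"
  have "\<epsilon> > 0" using \<sigma> by (simp add: \<epsilon>_def)
  have "eventually (\<lambda>k. measure (prodM M (n * k))
      {\<omega> \<in> space (prodM M (n * k)). real k * \<sigma> \<le> block_count n A k \<omega>}
      \<le> exp (-2 * real k * \<epsilon>\<^sup>2)) sequentially"
    using eventually_ge_at_top[of 1]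
    by eventually_elim (use block_count_Hoeffding(1)[OF M A n, of _ \<epsilon>] \<open>\<epsilon> > 0\<close> in \<open>simp add: \<epsilon>_def\<close>)
  from tendsto_sandwich[OF _ this tendsto_const exp_neg_linear_LIMSEQ_0] \<open>\<epsilon> > 0\<close>
  show ?thesis by simp
qed

lemma S_set_atLeast_in_T_class_iff:
  assumes A: "A \<in> sets (prodM M n)" and n: "n \<ge> 1" and k: "k \<ge> 1"
  shows "(n * k, S_set M n A {\<sigma>..1} k) \<in> T_class M \<delta> \<longleftrightarrow>
    \<delta> \<le> measure (prodM M (n * k)) {\<omega> \<in> space (prodM M (n * k)). real k * \<sigma> \<le> block_count n A k \<omega>}"
proof -
  have "{\<omega> \<in> space (prodM M (n * k)). real k * \<sigma> \<le> block_count n A k \<omega>} \<in> sets (prodM M (n * k))"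
    by (intro borel_measurable_le borel_measurable_const borel_measurable_block_count[OF A])
  then show ?thesis
    using n k by (simp add: T_class_def ext_events_def S_set_atLeast_eq[OF k])
qed

lemma ex_all_greater_iff_eventually_sequentially:
  "(\<exists>k0. \<forall>k>k0. P k) \<longleftrightarrow> eventually P sequentially"
  unfolding eventually_sequentially by (meson Suc_le_eq less_imp_le_nat)

lemma Sup_threshold_eq:
  fixes P :: "nat \<Rightarrow> real \<Rightarrow> bool" and p :: real
  assumes "p \<le> 1"
    and zero: "eventually (\<lambda>k. P k 0) sequentially"
    and below: "\<And>\<sigma>. \<sigma> < p \<Longrightarrow> eventually (\<lambda>k. P k \<sigma>) sequentially"
    and above: "\<And>\<sigma>. p < \<sigma> \<Longrightarrow> eventually (\<lambda>k. \<not> P k \<sigma>) sequentially"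
  shows "Sup {\<sigma> \<in> {0..1}. \<exists>k0. \<forall>k>k0. P k \<sigma>} = p"
  unfolding ex_all_greater_iff_eventually_sequentially
proof (rule cSup_eq_non_empty)
  let ?S = "{\<sigma> \<in> {0..1}. eventually (\<lambda>k. P k \<sigma>) sequentially}"
  have "0 \<in> ?S" using zero by simp
  then show "?S \<noteq> {}" by blast
  show "\<sigma> \<le> p" if "\<sigma> \<in> ?S" for \<sigma>
  proof (rule ccontr)
    assume "\<not> \<sigma> \<le> p"
    then have "eventually (\<lambda>k. \<not> P k \<sigma>) sequentially" by (intro above) simp
    moreover have "eventually (\<lambda>k. P k \<sigma>) sequentially" using that by simp
    ultimately have "eventually (\<lambda>k. False) sequentially" by eventually_elim simp
    then show False by simp
  qed
  show "p \<le> y" if y: "\<And>\<sigma>. \<sigma> \<in> ?S \<Longrightarrow> \<sigma> \<le> y" for y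
  proof (rule ccontr)
    assume "\<not> p \<le> y"
    moreover have "0 \<le> y" using y \<open>0 \<in> ?S\<close> .
    ultimately have "(y + p) / 2 \<in> ?S" using \<open>p \<le> 1\<close> below[of "(y + p) / 2"] by auto
    then show False using y \<open>\<not> p \<le> y\<close> by fastforce
  qed
qed

theorem mainTheorem4:
  fixes M :: "'a measure" and \<delta> :: real and n :: nat and A :: "(nat \<Rightarrow> 'a) set"
  assumes "prob_space M"
    and "1/2 < \<delta>" and "\<delta> < 1"
    and "(n, A) \<in> ext_events M"
  shows "C_measure M (T_class M \<delta>) n A = measure (prodM M n) A"
proof -
  have n: "n \<ge> 1" and A: "A \<in> sets (prodM M n)" using assms(4) by (auto simp: ext_events_def)
  interpret P: prob_space "prodM M n" by (rule prob_space_prodM[OF assms(1)])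
  have \<delta>: "0 < \<delta>" using assms(2) by simp
  let ?q = "\<lambda>k \<sigma>. measure (prodM M (n * k))
    {\<omega> \<in> space (prodM M (n * k)). real k * \<sigma> \<le> block_count n A k \<omega>}"
  have T_iff: "eventually (\<lambda>k. (n * k, S_set M n A {\<sigma>..1} k) \<in> T_class M \<delta> \<longleftrightarrow> \<delta> \<le> ?q k \<sigma>)
      sequentially" for \<sigma>
    using eventually_ge_at_top[of 1] by eventually_elim (rule S_set_atLeast_in_T_class_iff[OF A n])
  have q_zero: "?q k 0 = 1" for k
    by (simp add: block_count_def sum_nonneg prob_space.prob_space[OF prob_space_prodM[OF assms(1)]])
  show ?thesis
    unfolding C_measure_def
  proof (rule Sup_threshold_eq)
    show "eventually (\<lambda>k. (n * k, S_set M n A {0..1} k) \<in> T_class M \<delta>) sequentially"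
      using T_iff[of 0] by eventually_elim (use q_zero assms(3) in simp)
    show "eventually (\<lambda>k. (n * k, S_set M n A {\<sigma>..1} k) \<in> T_class M \<delta>) sequentially"
      if "\<sigma> < P.prob A" for \<sigma>
      using T_iff[of \<sigma>] order_tendstoD(1)[OF prob_block_count_ge_LIMSEQ_1[OF assms(1) A n that] assms(3)]
      by eventually_elim simp
    show "eventually (\<lambda>k. (n * k, S_set M n A {\<sigma>..1} k) \<notin> T_class M \<delta>) sequentially"
      if "P.prob A < \<sigma>" for \<sigma>
      using T_iff[of \<sigma>] order_tendstoD(2)[OF prob_block_count_ge_LIMSEQ_0[OF assms(1) A n that] \<delta>]
      by eventually_elim auto
  qed simp_all
qed

end
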